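(* Let $\mathbb A$ be an abelian category with enough projective objects. A morphism $(f_0,f_1):a\to b$ in $\mathbb A^{[1]}_c$, where $a:A_1\to A_0$ and $b:B_1\to B_0$, is faithful in $\mathbb A^{[1]}_c$ if and only if the morphism $\begin{pmatrix}-a\\ f_1\end{pmatrix}:A_1\to A_0\oplus B_1$ is a monomorphism in $\mathbb A$.
   Context: Let $\mathbb A$ be an abelian category. The 2-category $\mathbb A^{[1]}$ has as objects the morphisms $a:A_1\to A_0$ of $\mathbb A$. For objects $a:A_1\to A_0$ and $b:B_1\to B_0$, a morphism $a\to b$ is a pair $(f_0,f_1)$ of morphisms $f_i:A_i\to B_i$ of $\mathbb A$ with $b f_1=f_0 a$; composition is componentwise. A 2-arrow $(f_0,f_1)\Rightarrow(g_0,g_1)$ between morphisms $a\to b$ is a morphism $\alpha:A_0\to B_1$ of $\mathbb A$ with $f_1-g_1=\alpha a$ and $f_0-g_0=b\alpha$; vertical composition is addition of such $\alpha$'s, and whiskering is given by $(h_0,h_1)\circ\alpha=h_1\alpha$ and $\alpha\circ(e_0,e_1)=\alpha e_0$. All 2-arrows are invertible, so each $\mathbf{Hom}(a,b)$ is a groupoid. $\mathbb A^{[1]}_c$ is the full 2-subcategory of $\mathbb A^{[1]}$ on the objects $a:A_1\to A_0$ with $A_0$ projective in $\mathbb A$. A morphism $f:a\to b$ of $\mathbb A^{[1]}_c$ is faithful in $\mathbb A^{[1]}_c$ if for every object $x$ of $\mathbb A^{[1]}_c$ the functor $f\circ-:\mathbf{Hom}(x,a)\to\mathbf{Hom}(x,b)$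 is faithful. *)

theory Defs
  imports Main
begin

record ('o, 'm) acat =
  obj :: "'o set"
  arr :: "'m set"
  src :: "'m \<Rightarrow> 'o"
  tgt :: "'m \<Rightarrow> 'o"
  cmp :: "'m \<Rightarrow> 'm \<Rightarrow> 'm"   (* cmp C g f = g o f *)
  idn :: "'o \<Rightarrow> 'm"
  pls :: "'m \<Rightarrow> 'm \<Rightarrow> 'm"
  zro :: "'o \<Rightarrow> 'o \<Rightarrow> 'm"   (* zero morphism A \<rightarrow> B *)
  ngt :: "'m \<Rightarrow> 'm"

definition hom :: "('o, 'm, 'x) acat_scheme \<Rightarrow> 'o \<Rightarrow> 'o \<Rightarrow> 'm set" where
  "hom C A B = {f \<in> arr C. src C f = A \<and> tgt C f = B}"

definition sbt :: "('o, 'm, 'x) acat_scheme \<Rightarrow> 'm \<Rightarrow> 'm \<Rightarrow> 'm" where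
  "sbt C f g = pls C f (ngt C g)"

definition category :: "('o, 'm, 'x) acat_scheme \<Rightarrow> bool" where
  "category C \<longleftrightarrow>
     (\<forall>f\<in>arr C. src C f \<in> obj C \<and> tgt C f \<in> obj C) \<and>
     (\<forall>A\<in>obj C. idn C A \<in> hom C A A) \<and>
     (\<forall>f g. f \<in> arr C \<and> g \<in> arr C \<and> tgt C f = src C g
        \<longrightarrow> cmp C g f \<in> hom C (src C f) (tgt C g)) \<and>
     (\<forall>f g h. f \<in> arr C \<and> g \<in> arr C \<and> h \<in> arr C \<and> tgt C f = src C g \<and> tgt C g = src C h
        \<longrightarrow> cmp C h (cmp C g f) = cmp C (cmp C h g) f) \<and>
     (\<forall>f\<in>arr C. cmp C (idn C (tgt C f)) f = f \<and> cmp C f (idn C (src C f)) = f)"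

definition preadditive :: "('o, 'm, 'x) acat_scheme \<Rightarrow> bool" where
  "preadditive C \<longleftrightarrow> category C \<and>
     (\<forall>A\<in>obj C. \<forall>B\<in>obj C.
        zro C A B \<in> hom C A B \<and>
        (\<forall>f\<in>hom C A B. \<forall>g\<in>hom C A B. pls C f g \<in> hom C A B) \<and>
        (\<forall>f\<in>hom C A B. ngt C f \<in> hom C A B) \<and>
        (\<forall>f\<in>hom C A B. \<forall>g\<in>hom C A B. \<forall>h\<in>hom C A B.
            pls C (pls C f g) h = pls C f (pls C g h)) \<and>
        (\<forall>f\<in>hom C A B. \<forall>g\<in>hom C A B. pls C f g = pls C g f) \<and>
        (\<forall>f\<in>hom C A B. pls C (zro C A B) f = f) \<and>
        (\<forall>f\<in>hom C A B. pls C (ngt C f) f = zro C A B)) \<and>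
     (\<forall>A\<in>obj C. \<forall>B\<in>obj C. \<forall>D\<in>obj C.
        \<forall>f\<in>hom C A B. \<forall>g\<in>hom C B D. \<forall>g'\<in>hom C B D.
          cmp C (pls C g g') f = pls C (cmp C g f) (cmp C g' f)) \<and>
     (\<forall>A\<in>obj C. \<forall>B\<in>obj C. \<forall>D\<in>obj C.
        \<forall>f\<in>hom C A B. \<forall>f'\<in>hom C A B. \<forall>g\<in>hom C B D.
          cmp C g (pls C f f') = pls C (cmp C g f) (cmp C g f'))"

definition zero_object :: "('o, 'm, 'x) acat_scheme \<Rightarrow> 'o \<Rightarrow> bool" where
  "zero_object C Z \<longleftrightarrow> Z \<in> obj C \<and>
     (\<forall>A\<in>obj C. (\<exists>!f. f \<in> hom C Z A) \<and> (\<exists>!f. f \<in> hom C A Z))"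

definition is_biproduct ::
  "('o, 'm, 'x) acat_scheme \<Rightarrow> 'o \<Rightarrow> 'o \<Rightarrow> 'o \<Rightarrow> 'm \<Rightarrow> 'm \<Rightarrow> 'm \<Rightarrow> 'm \<Rightarrow> bool" where
  "is_biproduct C A B S i1 i2 p1 p2 \<longleftrightarrow> S \<in> obj C \<and>
     i1 \<in> hom C A S \<and> i2 \<in> hom C B S \<and> p1 \<in> hom C S A \<and> p2 \<in> hom C S B \<and>
     cmp C p1 i1 = idn C A \<and> cmp C p2 i2 = idn C B \<and>
     cmp C p2 i1 = zro C A B \<and> cmp C p1 i2 = zro C B A \<and>
     pls C (cmp C i1 p1) (cmp C i2 p2) = idn C S"

definition is_kernel :: "('o, 'm, 'x) acat_scheme \<Rightarrow> 'm \<Rightarrow> 'm \<Rightarrow> bool" where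
  "is_kernel C f k \<longleftrightarrow> f \<in> arr C \<and> k \<in> arr C \<and> tgt C k = src C f \<and>
     cmp C f k = zro C (src C k) (tgt C f) \<and>
     (\<forall>g\<in>arr C. tgt C g = src C f \<and> cmp C f g = zro C (src C g) (tgt C f)
        \<longrightarrow> (\<exists>!u. u \<in> hom C (src C g) (src C k) \<and> cmp C k u = g))"

definition is_cokernel :: "('o, 'm, 'x) acat_scheme \<Rightarrow> 'm \<Rightarrow> 'm \<Rightarrow> bool" where
  "is_cokernel C f q \<longleftrightarrow> f \<in> arr C \<and> q \<in> arr C \<and> src C q = tgt C f \<and>
     cmp C q f = zro C (src C f) (tgt C q) \<and>
     (\<forall>g\<in>arr C. src C g = tgt C f \<and> cmp C g f = zro C (src C f) (tgt C g)
        \<longrightarrow> (\<exists>!u. u \<in> hom C (tgt C q) (tgt C g) \<and> cmp C u q = g))"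

definition is_mono :: "('o, 'm, 'x) acat_scheme \<Rightarrow> 'm \<Rightarrow> bool" where
  "is_mono C m \<longleftrightarrow> m \<in> arr C \<and>
     (\<forall>g h. g \<in> arr C \<and> h \<in> arr C \<and> tgt C g = src C m \<and> tgt C h = src C m \<and>
            src C g = src C h \<and> cmp C m g = cmp C m h \<longrightarrow> g = h)"

definition is_epi :: "('o, 'm, 'x) acat_scheme \<Rightarrow> 'm \<Rightarrow> bool" where
  "is_epi C e \<longleftrightarrow> e \<in> arr C \<and>
     (\<forall>g h. g \<in> arr C \<and> h \<in> arr C \<and> src C g = tgt C e \<and> src C h = tgt C e \<and>
            tgt C g = tgt C h \<and> cmp C g e = cmp C h e \<longrightarrow> g = h)"

definition abelian_category :: "('o, 'm, 'x) acat_scheme \<Rightarrow> bool" where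
  "abelian_category C \<longleftrightarrow> preadditive C \<and>
     (\<exists>Z. zero_object C Z) \<and>
     (\<forall>A\<in>obj C. \<forall>B\<in>obj C. \<exists>S i1 i2 p1 p2. is_biproduct C A B S i1 i2 p1 p2) \<and>
     (\<forall>f\<in>arr C. \<exists>k. is_kernel C f k) \<and>
     (\<forall>f\<in>arr C. \<exists>q. is_cokernel C f q) \<and>
     (\<forall>m. is_mono C m \<longrightarrow> (\<exists>f. is_kernel C f m)) \<and>
     (\<forall>e. is_epi C e \<longrightarrow> (\<exists>f. is_cokernel C f e))"

definition projective :: "('o, 'm, 'x) acat_scheme \<Rightarrow> 'o \<Rightarrow> bool" where
  "projective C P \<longleftrightarrow> P \<in> obj C \<and>
     (\<forall>e g. is_epi C e \<and> g \<in> hom C P (tgt C e) \<longrightarrow> (\<exists>h\<in>hom C P (src C e). cmp C e h = g))"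

definition enough_projectives :: "('o, 'm, 'x) acat_scheme \<Rightarrow> bool" where
  "enough_projectives C \<longleftrightarrow>
     (\<forall>A\<in>obj C. \<exists>P e. projective C P \<and> e \<in> hom C P A \<and> is_epi C e)"

text \<open>The 2-category A^[1]_c. Objects: morphisms a : A1 \<rightarrow> A0 with A0 projective
  (A1 = src a, A0 = tgt a). A morphism a \<rightarrow> b is a pair (f0, f1).\<close>

definition cobj :: "('o, 'm, 'x) acat_scheme \<Rightarrow> 'm \<Rightarrow> bool" where
  "cobj C a \<longleftrightarrow> a \<in> arr C \<and> projective C (tgt C a)"

definition amor :: "('o, 'm, 'x) acat_scheme \<Rightarrow> 'm \<Rightarrow> 'm \<Rightarrow> 'm \<times> 'm \<Rightarrow> bool" where
  "amor C a b f \<longleftrightarrow> fst f \<in> hom C (tgt C a) (tgt C b) \<and> snd f \<in> hom C (src C a) (src C b) \<and>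
     cmp C b (snd f) = cmp C (fst f) a"

definition two_cell :: "('o, 'm, 'x) acat_scheme \<Rightarrow> 'm \<Rightarrow> 'm \<Rightarrow> 'm \<times> 'm \<Rightarrow> 'm \<times> 'm \<Rightarrow> 'm \<Rightarrow> bool" where
  "two_cell C a b f g \<alpha> \<longleftrightarrow> amor C a b f \<and> amor C a b g \<and>
     \<alpha> \<in> hom C (tgt C a) (src C b) \<and>
     sbt C (snd f) (snd g) = cmp C \<alpha> a \<and> sbt C (fst f) (fst g) = cmp C b \<alpha>"

text \<open>f : a \<rightarrow> b is faithful in A^[1]_c: for every object x of A^[1]_c the functor
  f \<circ> - : Hom(x,a) \<rightarrow> Hom(x,b) is faithful; on 2-arrows it is alpha \<mapsto> f1 alpha.\<close>
definition faithful_c :: "('o, 'm, 'x) acat_scheme \<Rightarrow> 'm \<Rightarrow> 'm \<Rightarrow> 'm \<times> 'm \<Rightarrow> bool" where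
  "faithful_c C a b f \<longleftrightarrow>
     (\<forall>x. cobj C x \<longrightarrow>
        (\<forall>g h \<alpha> \<beta>. two_cell C x a g h \<alpha> \<and> two_cell C x a g h \<beta> \<and>
           cmp C (snd f) \<alpha> = cmp C (snd f) \<beta> \<longrightarrow> \<alpha> = \<beta>))"

end

theory Submission
  imports Defs
begin

(* Write A1 = src a, A0 = tgt a, B1 = src b, and call a pair of
   morphisms g : A1 -> X, h : A1 -> Y jointly monic if g.u = g.v and h.u = h.v imply u = v.
   (1) The column (i1.(-a) + i2.f1) : A1 -> A0 (+) B1 is mono iff (-a, f1) is jointly
       monic (compose with the projections), iff (a, f1) is jointly monic (negation is
       injective and commutes with composition).
   (2) faithful_c C a b (f0, f1) iff (a, f1) is jointly monic.  Two 2-cells alpha, beta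
       between the same pair of morphisms x -> a satisfy a.alpha = a.beta, which gives
       one direction.  Conversely, by additivity it suffices to show that every d : D -> A1
       with a.d = 0 and f1.d = 0 vanishes, and with enough projectives it suffices to
       test this on d : P -> A1 with P projective; such a d is a 2-cell between the zero
       morphisms from the object 0 : P -> P of the 2-category to a, as is 0 itself,
       and f1 does not distinguish them. *)

lemma hom_obj: "category C \<Longrightarrow> f \<in> hom C A B \<Longrightarrow> A \<in> obj C \<and> B \<in> obj C"
  unfolding category_def hom_def by auto

lemma cmp_hom:
  "category C \<Longrightarrow> f \<in> hom C A B \<Longrightarrow> g \<in> hom C B D \<Longrightarrow> cmp C g f \<in> hom C A D"
  unfolding category_def hom_def by auto

lemma cmp_assoc:
  "category C \<Longrightarrow> f \<in> hom C A B \<Longrightarrow> g \<in> hom C B D \<Longrightarrow> h \<in> hom C D E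
   \<Longrightarrow> cmp C h (cmp C g f) = cmp C (cmp C h g) f"
  unfolding category_def hom_def by auto

lemma cmp_idn_left: "category C \<Longrightarrow> f \<in> hom C A B \<Longrightarrow> cmp C (idn C B) f = f"
  unfolding category_def hom_def by auto

context
  fixes C :: "('o, 'm, 'x) acat_scheme"
  assumes pa: "preadditive C"
begin

lemma cat: "category C"
  using pa by (simp add: preadditive_def)

lemma hom_group:
  assumes "A \<in> obj C \<and> B \<in> obj C"
  shows "zro C A B \<in> hom C A B \<and>
    (\<forall>f\<in>hom C A B. \<forall>g\<in>hom C A B. pls C f g \<in> hom C A B) \<and>
    (\<forall>f\<in>hom C A B. ngt C f \<in> hom C A B) \<and>
    (\<forall>f\<in>hom C A B. \<forall>g\<in>hom C A B. \<forall>h\<in>hom C A B.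
        pls C (pls C f g) h = pls C f (pls C g h)) \<and>
    (\<forall>f\<in>hom C A B. \<forall>g\<in>hom C A B. pls C f g = pls C g f) \<and>
    (\<forall>f\<in>hom C A B. pls C (zro C A B) f = f) \<and>
    (\<forall>f\<in>hom C A B. pls C (ngt C f) f = zro C A B)"
  using pa assms unfolding preadditive_def by (elim conjE) blast

lemma zro_hom: "A \<in> obj C \<Longrightarrow> B \<in> obj C \<Longrightarrow> zro C A B \<in> hom C A B"
  using hom_group by simp

lemma pls_hom: "f \<in> hom C A B \<Longrightarrow> g \<in> hom C A B \<Longrightarrow> pls C f g \<in> hom C A B"
  by (frule hom_obj[OF cat], drule hom_group, blast)

lemma ngt_hom: "f \<in> hom C A B \<Longrightarrow> ngt C f \<in> hom C A B"
  by (frule hom_obj[OF cat], drule hom_group, blast)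

lemma add_assoc:
  "f \<in> hom C A B \<Longrightarrow> g \<in> hom C A B \<Longrightarrow> h \<in> hom C A B
   \<Longrightarrow> pls C (pls C f g) h = pls C f (pls C g h)"
  by (frule hom_obj[OF cat], drule hom_group, blast)

lemma add_comm: "f \<in> hom C A B \<Longrightarrow> g \<in> hom C A B \<Longrightarrow> pls C f g = pls C g f"
  by (frule hom_obj[OF cat], drule hom_group, blast)

lemma zero_add: "f \<in> hom C A B \<Longrightarrow> pls C (zro C A B) f = f"
  by (frule hom_obj[OF cat], drule hom_group, blast)

lemma neg_add: "f \<in> hom C A B \<Longrightarrow> pls C (ngt C f) f = zro C A B"
  by (frule hom_obj[OF cat], drule hom_group, blast)

lemma cmp_pls_left:
  assumes "f \<in> hom C A B" "g \<in> hom C B D" "g' \<in> hom C B D"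
  shows "cmp C (pls C g g') f = pls C (cmp C g f) (cmp C g' f)"
proof -
  have "\<forall>A\<in>obj C. \<forall>B\<in>obj C. \<forall>D\<in>obj C. \<forall>f\<in>hom C A B. \<forall>g\<in>hom C B D. \<forall>g'\<in>hom C B D.
          cmp C (pls C g g') f = pls C (cmp C g f) (cmp C g' f)"
    using pa unfolding preadditive_def by (elim conjE)
  then show ?thesis
    using assms hom_obj[OF cat assms(1)] hom_obj[OF cat assms(2)] by blast
qed

lemma cmp_pls_right:
  assumes "f \<in> hom C A B" "f' \<in> hom C A B" "g \<in> hom C B D"
  shows "cmp C g (pls C f f') = pls C (cmp C g f) (cmp C g f')"
proof -
  have "\<forall>A\<in>obj C. \<forall>B\<in>obj C. \<forall>D\<in>obj C. \<forall>f\<in>hom C A B. \<forall>f'\<in>hom C A B. \<forall>g\<in>hom C B D.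
          cmp C g (pls C f f') = pls C (cmp C g f) (cmp C g f')"
    using pa unfolding preadditive_def by (elim conjE)
  then show ?thesis
    using assms hom_obj[OF cat assms(1)] hom_obj[OF cat assms(3)] by blast
qed

lemma add_zero: "f \<in> hom C A B \<Longrightarrow> pls C f (zro C A B) = f"
  using add_comm zero_add zro_hom hom_obj[OF cat] by metis

lemma add_neg: "f \<in> hom C A B \<Longrightarrow> pls C f (ngt C f) = zro C A B"
  using add_comm neg_add ngt_hom by metis

lemma add_right_cancel:
  assumes "x \<in> hom C A B" "y \<in> hom C A B" "c \<in> hom C A B" "pls C x c = pls C y c"
  shows "x = y"
proof -
  have undo: "pls C (pls C z c) (ngt C c) = z" if z: "z \<in> hom C A B" for z
  proof -
    have "pls C (pls C z c) (ngt C c) = pls C z (pls C c (ngt C c))"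
      using add_assoc[OF z assms(3) ngt_hom[OF assms(3)]] .
    also have "\<dots> = z"
      using add_neg[OF assms(3)] add_zero[OF z] by simp
    finally show ?thesis .
  qed
  have "x = pls C (pls C x c) (ngt C c)"
    using undo[OF assms(1)] by simp
  also have "\<dots> = pls C (pls C y c) (ngt C c)"
    using assms(4) by simp
  also have "\<dots> = y"
    using undo[OF assms(2)] .
  finally show ?thesis .
qed

lemma cmp_zro_left:
  assumes "f \<in> hom C A B" "D \<in> obj C"
  shows "cmp C (zro C B D) f = zro C A D"
proof -
  have z: "zro C B D \<in> hom C B D"
    using zro_hom hom_obj[OF cat assms(1)] assms(2) by simp
  have zf: "cmp C (zro C B D) f \<in> hom C A D"
    using cmp_hom[OF cat assms(1) z] .
  have "pls C (cmp C (zro C B D) f) (cmp C (zro C B D) f) = cmp C (zro C B D) f"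
    using cmp_pls_left[OF assms(1) z z] zero_add[OF z] by simp
  also have "\<dots> = pls C (zro C A D) (cmp C (zro C B D) f)"
    using zero_add[OF zf] by simp
  finally show ?thesis
    using add_right_cancel zf zro_hom hom_obj[OF cat zf] by blast
qed

lemma cmp_zro_right:
  assumes "g \<in> hom C B D" "A \<in> obj C"
  shows "cmp C g (zro C A B) = zro C A D"
proof -
  have z: "zro C A B \<in> hom C A B"
    using zro_hom hom_obj[OF cat assms(1)] assms(2) by simp
  have gz: "cmp C g (zro C A B) \<in> hom C A D"
    using cmp_hom[OF cat z assms(1)] .
  have "pls C (cmp C g (zro C A B)) (cmp C g (zro C A B)) = cmp C g (zro C A B)"
    using cmp_pls_right[OF z z assms(1)] zero_add[OF z] by simp
  also have "\<dots> = pls C (zro C A D) (cmp C g (zro C A B))"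
    using zero_add[OF gz] by simp
  finally show ?thesis
    using add_right_cancel gz zro_hom hom_obj[OF cat gz] by blast
qed

lemma ngt_ngt:
  assumes "f \<in> hom C A B"
  shows "ngt C (ngt C f) = f"
proof -
  have "pls C (ngt C (ngt C f)) (ngt C f) = pls C f (ngt C f)"
    using neg_add[OF ngt_hom[OF assms]] neg_add[OF assms] add_comm assms ngt_hom by metis
  then show ?thesis
    using add_right_cancel ngt_hom assms by blast
qed

lemma cmp_ngt_left:
  assumes "g \<in> hom C B D" "f \<in> hom C A B"
  shows "cmp C (ngt C g) f = ngt C (cmp C g f)"
proof -
  have gf: "cmp C g f \<in> hom C A D"
    using cmp_hom[OF cat assms(2,1)] .
  have "pls C (cmp C (ngt C g) f) (cmp C g f) = cmp C (pls C (ngt C g) g) f"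
    using cmp_pls_left[OF assms(2) ngt_hom[OF assms(1)] assms(1)] by simp
  also have "\<dots> = pls C (ngt C (cmp C g f)) (cmp C g f)"
    using neg_add[OF assms(1)] neg_add[OF gf] cmp_zro_left[OF assms(2)]
      hom_obj[OF cat assms(1)] by simp
  finally show ?thesis
    using add_right_cancel cmp_hom[OF cat assms(2) ngt_hom[OF assms(1)]] ngt_hom gf by blast
qed

lemma sbt_pls:
  assumes "x \<in> hom C A B" "y \<in> hom C A B"
  shows "pls C (sbt C x y) y = x"
proof -
  have "pls C (sbt C x y) y = pls C x (pls C (ngt C y) y)"
    unfolding sbt_def using add_assoc assms ngt_hom by blast
  then show ?thesis
    using neg_add[OF assms(2)] zero_add[OF assms(1)] add_comm assms zro_hom
      hom_obj[OF cat assms(1)] by metis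
qed

lemma sbt_self: "x \<in> hom C A B \<Longrightarrow> sbt C x x = zro C A B"
  unfolding sbt_def using add_neg .

lemma sbt_hom: "x \<in> hom C A B \<Longrightarrow> y \<in> hom C A B \<Longrightarrow> sbt C x y \<in> hom C A B"
  unfolding sbt_def using pls_hom ngt_hom by blast

lemma cmp_eq_iff_cmp_sbt_zro:
  assumes "\<alpha> \<in> hom C D A" "\<beta> \<in> hom C D A" "g \<in> hom C A B"
  shows "cmp C g \<alpha> = cmp C g \<beta> \<longleftrightarrow> cmp C g (sbt C \<alpha> \<beta>) = zro C D B"
proof -
  have d: "sbt C \<alpha> \<beta> \<in> hom C D A"
    using sbt_hom assms by blast
  have gd: "cmp C g (sbt C \<alpha> \<beta>) \<in> hom C D B" and g\<beta>: "cmp C g \<beta> \<in> hom C D B"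
    using cmp_hom[OF cat d assms(3)] cmp_hom[OF cat assms(2,3)] by auto
  have "cmp C g \<alpha> = pls C (cmp C g (sbt C \<alpha> \<beta>)) (cmp C g \<beta>)"
    using cmp_pls_right[OF d assms(2,3)] sbt_pls[OF assms(1,2)] by simp
  then show ?thesis
    using add_right_cancel[OF gd _ g\<beta>] zero_add[OF g\<beta>] zro_hom hom_obj[OF cat gd] by metis
qed

lemma eq_iff_sbt_zro:
  assumes "\<alpha> \<in> hom C D A" "\<beta> \<in> hom C D A"
  shows "\<alpha> = \<beta> \<longleftrightarrow> sbt C \<alpha> \<beta> = zro C D A"
  using cmp_eq_iff_cmp_sbt_zro[OF assms] cmp_idn_left[OF cat] sbt_hom assms
    cat hom_obj[OF cat assms(1)] unfolding category_def by metis

end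

section \<open>Testing on projectives\<close>

text \<open>With enough projectives a morphism vanishes as soon as it vanishes on every
  morphism out of a projective object: precompose with a projective cover (an epi).\<close>

lemma zro_if_zro_on_projectives:
  assumes pa: "preadditive C" and ep: "enough_projectives C"
    and d: "d \<in> hom C Y A"
    and vanish: "\<And>P e. projective C P \<Longrightarrow> e \<in> hom C P Y \<Longrightarrow> cmp C d e = zro C P A"
  shows "d = zro C Y A"
proof -
  have objs: "Y \<in> obj C" "A \<in> obj C"
    using hom_obj[OF cat[OF pa] d] by auto
  obtain P e where Pe: "projective C P" "e \<in> hom C P Y" "is_epi C e"
    using ep objs(1) unfolding enough_projectives_def by blast
  have "cmp C d e = cmp C (zro C Y A) e"
    using vanish[OF Pe(1,2)] cmp_zro_left[OF pa Pe(2) objs(2)] by simp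
  then show ?thesis
    using Pe(2,3) d zro_hom[OF pa objs] unfolding is_epi_def hom_def by auto
qed

definition jointly_monic :: "('o, 'm, 'x) acat_scheme \<Rightarrow> 'm \<Rightarrow> 'm \<Rightarrow> bool" where
  "jointly_monic C g h \<longleftrightarrow>
     (\<forall>D \<alpha> \<beta>. \<alpha> \<in> hom C D (src C g) \<and> \<beta> \<in> hom C D (src C g) \<and>
        cmp C g \<alpha> = cmp C g \<beta> \<and> cmp C h \<alpha> = cmp C h \<beta> \<longrightarrow> \<alpha> = \<beta>)"

text \<open>By additivity it suffices to check that the joint kernel is trivial, and with
  enough projectives only on test objects that are projective.\<close>

lemma jointly_monicI_projectives:
  assumes pa: "preadditive C" and ep: "enough_projectives C"
    and g: "g \<in> hom C A X" and h: "h \<in> hom C A Y"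
    and kernel: "\<And>P d. projective C P \<Longrightarrow> d \<in> hom C P A \<Longrightarrow>
        cmp C g d = zro C P X \<Longrightarrow> cmp C h d = zro C P Y \<Longrightarrow> d = zro C P A"
  shows "jointly_monic C g h"
  unfolding jointly_monic_def
proof (intro allI impI, elim conjE)
  fix D \<alpha> \<beta>
  assume \<alpha>: "\<alpha> \<in> hom C D (src C g)" and \<beta>: "\<beta> \<in> hom C D (src C g)"
    and eq_g: "cmp C g \<alpha> = cmp C g \<beta>" and eq_h: "cmp C h \<alpha> = cmp C h \<beta>"
  have src_g: "src C g = A"
    using g by (simp add: hom_def)
  define d where "d = sbt C \<alpha> \<beta>"
  have dH: "d \<in> hom C D A"
    unfolding d_def using sbt_hom[OF pa] \<alpha> \<beta> src_g by simp
  have gd: "cmp C g d = zro C D X" and hd: "cmp C h d = zro C D Y"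
    using cmp_eq_iff_cmp_sbt_zro[OF pa _ _ g, of \<alpha> D \<beta>]
      cmp_eq_iff_cmp_sbt_zro[OF pa _ _ h, of \<alpha> D \<beta>] \<alpha> \<beta> src_g eq_g eq_h
    unfolding d_def by auto
  have "d = zro C D A"
  proof (rule zro_if_zro_on_projectives[OF pa ep dH])
    fix P e
    assume P: "projective C P" and e: "e \<in> hom C P D"
    have "cmp C g (cmp C d e) = zro C P X" and "cmp C h (cmp C d e) = zro C P Y"
      using cmp_assoc[OF cat[OF pa] e dH g] cmp_assoc[OF cat[OF pa] e dH h] gd hd
        cmp_zro_left[OF pa e] hom_obj[OF cat[OF pa] g] hom_obj[OF cat[OF pa] h] by auto
    then show "cmp C d e = zro C P A"
      using kernel[OF P cmp_hom[OF cat[OF pa] e dH]] by blast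
  qed
  then show "\<alpha> = \<beta>"
    using eq_iff_sbt_zro[OF pa] \<alpha> \<beta> src_g unfolding d_def by simp
qed

lemma jointly_monic_ngt:
  assumes pa: "preadditive C" and g: "g \<in> hom C A X"
  shows "jointly_monic C (ngt C g) h \<longleftrightarrow> jointly_monic C g h"
proof -
  have "cmp C (ngt C g) \<alpha> = cmp C (ngt C g) \<beta> \<longleftrightarrow> cmp C g \<alpha> = cmp C g \<beta>"
    if "\<alpha> \<in> hom C D A" "\<beta> \<in> hom C D A" for D \<alpha> \<beta>
    using cmp_ngt_left[OF pa g] that ngt_ngt[OF pa] cmp_hom[OF cat[OF pa] _ g] by metis
  moreover have "src C (ngt C g) = src C g"
    using ngt_hom[OF pa g] g by (simp add: hom_def)
  ultimately show ?thesis
    using g unfolding jointly_monic_def hom_def by (smt (verit) mem_Collect_eq)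
qed

section \<open>Columns into a biproduct\<close>

text \<open>For a biproduct S of X and Y, the column of u : A -> X and v : A -> Y is
  i1.u + i2.v : A -> S.  Composition acts componentwise on columns, and a column is
  determined by its components; hence a column is mono iff its components are
  jointly monic.\<close>

context
  fixes C :: "('o, 'm, 'x) acat_scheme" and X Y S :: 'o and i1 i2 p1 p2 :: 'm
  assumes pa: "preadditive C"
    and bp: "is_biproduct C X Y S i1 i2 p1 p2"
begin

lemma biproduct_homs:
  "i1 \<in> hom C X S" "i2 \<in> hom C Y S" "p1 \<in> hom C S X" "p2 \<in> hom C S Y"
  using bp by (simp_all add: is_biproduct_def)

lemma column_hom:
  "u \<in> hom C A X \<Longrightarrow> v \<in> hom C A Y \<Longrightarrow> pls C (cmp C i1 u) (cmp C i2 v) \<in> hom C A S"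
  using pls_hom[OF pa] cmp_hom[OF cat[OF pa]] biproduct_homs by blast

lemma column_cmp:
  assumes u: "u \<in> hom C A X" and v: "v \<in> hom C A Y" and d: "d \<in> hom C D A"
  shows "cmp C (pls C (cmp C i1 u) (cmp C i2 v)) d
         = pls C (cmp C i1 (cmp C u d)) (cmp C i2 (cmp C v d))"
  using cmp_pls_left[OF pa d] cmp_hom[OF cat[OF pa] u] cmp_hom[OF cat[OF pa] v]
    cmp_assoc[OF cat[OF pa] d u] cmp_assoc[OF cat[OF pa] d v] biproduct_homs by metis

lemma column_components:
  assumes u: "u \<in> hom C D X" and v: "v \<in> hom C D Y"
  shows "cmp C p1 (pls C (cmp C i1 u) (cmp C i2 v)) = u"
    and "cmp C p2 (pls C (cmp C i1 u) (cmp C i2 v)) = v"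
proof -
  note ct = cat[OF pa] and homs = biproduct_homs
  have i1u: "cmp C i1 u \<in> hom C D S" and i2v: "cmp C i2 v \<in> hom C D S"
    using cmp_hom[OF ct u homs(1)] cmp_hom[OF ct v homs(2)] by auto
  have objs: "X \<in> obj C" "Y \<in> obj C"
    using hom_obj[OF ct u] hom_obj[OF ct v] by auto
  have "cmp C p1 (pls C (cmp C i1 u) (cmp C i2 v))
        = pls C (cmp C (cmp C p1 i1) u) (cmp C (cmp C p1 i2) v)"
    using cmp_pls_right[OF pa i1u i2v homs(3)] cmp_assoc[OF ct u homs(1,3)]
      cmp_assoc[OF ct v homs(2,3)] by simp
  also have "\<dots> = pls C u (zro C D X)"
    using bp cmp_idn_left[OF ct u] cmp_zro_left[OF pa v objs(1)]
    unfolding is_biproduct_def by simp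
  finally show "cmp C p1 (pls C (cmp C i1 u) (cmp C i2 v)) = u"
    using add_zero[OF pa u] by simp
  have "cmp C p2 (pls C (cmp C i1 u) (cmp C i2 v))
        = pls C (cmp C (cmp C p2 i1) u) (cmp C (cmp C p2 i2) v)"
    using cmp_pls_right[OF pa i1u i2v homs(4)] cmp_assoc[OF ct u homs(1,4)]
      cmp_assoc[OF ct v homs(2,4)] by simp
  also have "\<dots> = pls C (zro C D Y) v"
    using bp cmp_idn_left[OF ct v] cmp_zro_left[OF pa u objs(2)]
    unfolding is_biproduct_def by simp
  finally show "cmp C p2 (pls C (cmp C i1 u) (cmp C i2 v)) = v"
    using zero_add[OF pa v] by simp
qed

lemma mono_column_iff_jointly_monic:
  assumes u: "u \<in> hom C A X" and v: "v \<in> hom C A Y"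
  shows "is_mono C (pls C (cmp C i1 u) (cmp C i2 v)) \<longleftrightarrow> jointly_monic C u v"
proof -
  let ?m = "pls C (cmp C i1 u) (cmp C i2 v)"
  have "cmp C ?m \<alpha> = cmp C ?m \<beta> \<longleftrightarrow> cmp C u \<alpha> = cmp C u \<beta> \<and> cmp C v \<alpha> = cmp C v \<beta>"
    if "\<alpha> \<in> hom C D A" "\<beta> \<in> hom C D A" for D \<alpha> \<beta>
    using column_cmp[OF u v] column_components cmp_hom[OF cat[OF pa] _ u]
      cmp_hom[OF cat[OF pa] _ v] that by metis
  moreover have "?m \<in> hom C A S" and "src C u = A"
    using column_hom[OF u v] u by (auto simp: hom_def)
  ultimately show ?thesis
    unfolding is_mono_def jointly_monic_def hom_def by (smt (verit) mem_Collect_eq)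
qed

end

section \<open>Faithfulness in the 2-category of projective presentations\<close>

lemma two_cells_agree_on_a:
  "two_cell C x a g h \<alpha> \<Longrightarrow> two_cell C x a g h \<beta> \<Longrightarrow> cmp C a \<alpha> = cmp C a \<beta>"
  unfolding two_cell_def by (elim conjE) simp

lemma zero_two_cell_iff:
  assumes pa: "preadditive C" and a: "a \<in> hom C A1 A0" and P: "P \<in> obj C"
  shows "two_cell C (zro C P P) a (zro C P A0, zro C P A1) (zro C P A0, zro C P A1) d
         \<longleftrightarrow> d \<in> hom C P A1 \<and> cmp C a d = zro C P A0"
proof -
  note ct = cat[OF pa]
  have objs: "A0 \<in> obj C" "A1 \<in> obj C"
    using hom_obj[OF ct a] by auto
  have zP: "zro C P P \<in> hom C P P" and z0: "zro C P A0 \<in> hom C P A0"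
    and z1: "zro C P A1 \<in> hom C P A1"
    using zro_hom[OF pa] P objs by auto
  have ends: "src C (zro C P P) = P" "tgt C (zro C P P) = P" "src C a = A1" "tgt C a = A0"
    using zP a by (auto simp: hom_def)
  have "amor C (zro C P P) a (zro C P A0, zro C P A1)"
    unfolding amor_def using z0 z1 ends cmp_zro_right[OF pa a P] cmp_zro_left[OF pa zP objs(1)]
    by simp
  moreover have "cmp C d (zro C P P) = zro C P A1" if "d \<in> hom C P A1"
    using cmp_zro_right[OF pa that P] .
  ultimately show ?thesis
    unfolding two_cell_def ends fst_conv snd_conv sbt_self[OF pa z0] sbt_self[OF pa z1]
    by metis
qed

lemma faithful_c_iff_jointly_monic:
  assumes pa: "preadditive C" and ep: "enough_projectives C"
    and a: "cobj C a" and f1: "f1 \<in> hom C (src C a) B1"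
  shows "faithful_c C a b (f0, f1) \<longleftrightarrow> jointly_monic C a f1"
proof
  assume faithful: "faithful_c C a b (f0, f1)"
  define A0 A1 where "A0 = tgt C a" and "A1 = src C a"
  have aH: "a \<in> hom C A1 A0"
    using a by (simp add: cobj_def hom_def A0_def A1_def)
  show "jointly_monic C a f1"
  proof (rule jointly_monicI_projectives[OF pa ep aH f1[folded A1_def]])
    fix P d
    assume P: "projective C P" and d: "d \<in> hom C P A1"
      and ad: "cmp C a d = zro C P A0" and fd: "cmp C f1 d = zro C P B1"
    have Pobj: "P \<in> obj C"
      using P by (simp add: projective_def)
    have zero_obj: "cobj C (zro C P P)"
      using zro_hom[OF pa Pobj Pobj] P by (simp add: cobj_def hom_def)
    have z1: "zro C P A1 \<in> hom C P A1"
      using zro_hom[OF pa Pobj] hom_obj[OF cat[OF pa] aH] by simp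
    have "cmp C f1 (zro C P A1) = zro C P B1"
      using cmp_zro_right[OF pa f1[folded A1_def] Pobj] .
    then show "d = zro C P A1"
      using faithful zero_obj zero_two_cell_iff[OF pa aH Pobj] d ad z1 fd
        cmp_zro_right[OF pa aH Pobj] unfolding faithful_c_def by (metis snd_conv)
  qed
next
  assume "jointly_monic C a f1"
  then show "faithful_c C a b (f0, f1)"
    unfolding faithful_c_def jointly_monic_def two_cell_def
    using two_cells_agree_on_a by (metis snd_conv)
qed

theorem lemma3p2:
  fixes C :: "('o, 'm) acat"
  assumes "abelian_category C"
    and "enough_projectives C"
    and "cobj C a" and "cobj C b"
    and "amor C a b (f0, f1)"
    and "is_biproduct C (tgt C a) (src C b) S i1 i2 p1 p2"
  shows "faithful_c C a b (f0, f1) \<longleftrightarrow>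
         is_mono C (pls C (cmp C i1 (ngt C a)) (cmp C i2 f1))"
proof -
  have pa: "preadditive C"
    using assms(1) by (simp add: abelian_category_def)
  have a: "a \<in> hom C (src C a) (tgt C a)"
    using assms(3) by (simp add: cobj_def hom_def)
  have f1: "f1 \<in> hom C (src C a) (src C b)"
    using assms(5) by (simp add: amor_def)
  have "faithful_c C a b (f0, f1) \<longleftrightarrow> jointly_monic C a f1"
    using faithful_c_iff_jointly_monic[OF pa assms(2,3) f1] .
  also have "\<dots> \<longleftrightarrow> jointly_monic C (ngt C a) f1"
    using jointly_monic_ngt[OF pa a] by simp
  also have "\<dots> \<longleftrightarrow> is_mono C (pls C (cmp C i1 (ngt C a)) (cmp C i2 f1))"
    using mono_column_iff_jointly_monic[OF pa assms(6) ngt_hom[OF pa a] f1] by simp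
  finally show ?thesis .
qed

end
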